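(* Let $G$ be a planar trivalent graph with a perfect matching $M$. If $G\setminus M$ (the graph with all vertices of $G$ and the edges not in $M$) contains a cycle with exactly $3$ edges, then $\langle G:M\rangle_2(1)=0$.
   Context: Graphs are finite and may have multiple edges; trivalent means every vertex has degree $3$. The $2$-factor polynomial $\langle G:M\rangle_2(z)\in\mathbb{Z}[z,z^{-1}]$ is defined as follows. Embed $G$ in the $2$-sphere. For a matching edge $e=uv$, let $\alpha,\beta$ be the other two edge-ends at $u$ and $\gamma,\delta$ the other two at $v$, labelled so that in a small disk around $e$ they appear in cyclic order $\alpha,\beta,\delta,\gamma$. The $0$-resolution at $e$ deletes $e,u,v$ and joins $\alpha$ to $\gamma$ and $\beta$ to $\delta$ by disjoint arcs; the $1$-resolution joins $\alpha$ to $\delta$ and $\beta$ to $\gamma$ by two arcs crossing once. For a state $s:M\to\{0,1\}$, resolving every matching edge accordingly yields $c(s)$ immersed closed curves, and $\langle G:M\rangle_2(z)=\sum_s(-z)^{|s|}(z+z^{-1})^{c(s)}$, where $|s|$ is the number of edges assigned $1$. This is independent of the chosen embedding. *)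

theory Defs
  imports Complex_Main
begin

text \<open>A trivalent graph (multi-edges and loops allowed) embedded in an oriented surface is
  encoded as a combinatorial map (rotation system): a finite set D of darts (half-edges),
  a fixed-point-free involution iota pairing the two ends of each edge, and a rotation
  sigma whose cycles are the vertices (cyclic order of edge-ends around each vertex).\<close>

definition trivalent_map :: "'d set \<Rightarrow> ('d \<Rightarrow> 'd) \<Rightarrow> ('d \<Rightarrow> 'd) \<Rightarrow> bool" where
  "trivalent_map D iota sigma \<longleftrightarrow> finite D \<and>
     (\<forall>d\<in>D. iota d \<in> D \<and> iota d \<noteq> d \<and> iota (iota d) = d) \<and>
     (\<forall>d\<in>D. sigma d \<in> D \<and> sigma d \<noteq> d \<and> sigma (sigma (sigma d)) = d)"

definition orbit_of :: "('d \<Rightarrow> 'd) \<Rightarrow> 'd \<Rightarrow> 'd set" where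
  "orbit_of f d = {(f ^^ n) d | n. True}"

definition orbits :: "('d \<Rightarrow> 'd) \<Rightarrow> 'd set \<Rightarrow> 'd set set" where
  "orbits f D = orbit_of f ` D"

text \<open>Vertices = sigma-orbits; faces = orbits of sigma o iota; connected components of the map.\<close>

definition map_components :: "'d set \<Rightarrow> ('d \<Rightarrow> 'd) \<Rightarrow> ('d \<Rightarrow> 'd) \<Rightarrow> 'd set set" where
  "map_components D iota sigma =
     D // (({(d, iota d) | d. d \<in> D} \<union> {(d, sigma d) | d. d \<in> D}
           \<union> {(iota d, d) | d. d \<in> D} \<union> {(sigma d, d) | d. d \<in> D})\<^sup>* \<inter> D \<times> D)"

text \<open>The embedding is spherical (genus 0 on every component) iff Euler's formula
  V - E + F = 2 holds for every connected component, i.e. summed: V - E + F = 2 C,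
  with E = |D|/2.  Multiplied by 2 to stay in the integers.\<close>

definition planar_map :: "'d set \<Rightarrow> ('d \<Rightarrow> 'd) \<Rightarrow> ('d \<Rightarrow> 'd) \<Rightarrow> bool" where
  "planar_map D iota sigma \<longleftrightarrow>
     2 * int (card (orbits sigma D)) - int (card D) + 2 * int (card (orbits (sigma \<circ> iota) D))
       = 4 * int (card (map_components D iota sigma))"

text \<open>A perfect matching, given as the set Md of darts of matching edges:
  closed under iota, and every vertex carries exactly one matching dart.\<close>

definition perfect_matching :: "'d set \<Rightarrow> ('d \<Rightarrow> 'd) \<Rightarrow> ('d \<Rightarrow> 'd) \<Rightarrow> 'd set \<Rightarrow> bool" where
  "perfect_matching D iota sigma Md \<longleftrightarrow> Md \<subseteq> D \<and> (\<forall>d\<in>Md. iota d \<in> Md) \<and>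
     (\<forall>d\<in>D. card ({d, sigma d, sigma (sigma d)} \<inter> Md) = 1)"

definition vertex_of :: "('d \<Rightarrow> 'd) \<Rightarrow> 'd \<Rightarrow> 'd set" where
  "vertex_of sigma d = {d, sigma d, sigma (sigma d)}"

definition matching_edges :: "('d \<Rightarrow> 'd) \<Rightarrow> 'd set \<Rightarrow> 'd set set" where
  "matching_edges iota Md = (\<lambda>d. {d, iota d}) ` Md"

definition has_triangle_off_matching ::
  "'d set \<Rightarrow> ('d \<Rightarrow> 'd) \<Rightarrow> ('d \<Rightarrow> 'd) \<Rightarrow> 'd set \<Rightarrow> bool" where
  "has_triangle_off_matching D iota sigma Md \<longleftrightarrow>
     (\<exists>d1 d2 d3. d1 \<in> D - Md \<and> d2 \<in> D - Md \<and> d3 \<in> D - Md \<and>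
        d2 \<in> vertex_of sigma (iota d1) \<and> d3 \<in> vertex_of sigma (iota d2) \<and>
        d1 \<in> vertex_of sigma (iota d3) \<and>
        vertex_of sigma d1 \<noteq> vertex_of sigma d2 \<and>
        vertex_of sigma d2 \<noteq> vertex_of sigma d3 \<and>
        vertex_of sigma d1 \<noteq> vertex_of sigma d3)"

text \<open>Resolution of a state S (set of matching edges assigned 1).  For a matching dart d at
  u with iota d at v, the other ends are sigma d, sigma(sigma d) at u and
  sigma(iota d), sigma(sigma(iota d)) at v; in cyclic order around the edge they appear as
  alpha = sigma d, beta = sigma(sigma d), delta = sigma(iota d), gamma = sigma(sigma(iota d)).
  0-resolution: alpha-gamma, beta-delta; 1-resolution: alpha-delta, beta-gamma.
  The curves are the connected components of the non-matching darts under the edge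
  pairing together with the resolution arcs.\<close>

definition resolution_rel ::
  "'d set \<Rightarrow> ('d \<Rightarrow> 'd) \<Rightarrow> ('d \<Rightarrow> 'd) \<Rightarrow> 'd set \<Rightarrow> 'd set set \<Rightarrow> ('d \<times> 'd) set" where
  "resolution_rel D iota sigma Md S =
     {(d, iota d) | d. d \<in> D - Md} \<union>
     {p. \<exists>d\<in>Md. if {d, iota d} \<in> S
          then p = (sigma d, sigma (iota d)) \<or> p = (sigma (sigma d), sigma (sigma (iota d)))
          else p = (sigma d, sigma (sigma (iota d))) \<or> p = (sigma (sigma d), sigma (iota d))}"

definition num_curves ::
  "'d set \<Rightarrow> ('d \<Rightarrow> 'd) \<Rightarrow> ('d \<Rightarrow> 'd) \<Rightarrow> 'd set \<Rightarrow> 'd set set \<Rightarrow> nat" where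
  "num_curves D iota sigma Md S =
     (let R = resolution_rel D iota sigma Md S
      in card ((D - Md) // ((R \<union> R\<inverse>)\<^sup>* \<inter> (D - Md) \<times> (D - Md))))"

definition two_factor_poly ::
  "'d set \<Rightarrow> ('d \<Rightarrow> 'd) \<Rightarrow> ('d \<Rightarrow> 'd) \<Rightarrow> 'd set \<Rightarrow> real \<Rightarrow> real" where
  "two_factor_poly D iota sigma Md z =
     (\<Sum>S\<in>Pow (matching_edges iota Md).
        (- z) ^ card S * (z + inverse z) ^ num_curves D iota sigma Md S)"

end

theory Submission
  imports Defs "HOL-Library.Disjoint_Sets"
begin

text \<open>At z = 1 the weight of a state S is (-1)^|S| 2^c(S), and 2^c(S) counts the 2-colourings
  of the non-matching darts that are constant on every curve of the resolution.  Exchanging the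
  two summations, it suffices to show that for each fixed colouring X the signed count of the
  states compatible with X vanishes.  This is trivial unless X is constant on every edge off the
  matching.  In that case two of the three edges of the triangle get the same colour; they meet
  at a vertex whose third edge e belongs to M, and because the two arcs of e on that side carry
  the same colour, the 0- and 1-resolution of e impose the same condition on X.  Toggling e is
  thus a sign-reversing involution on the compatible states.\<close>

definition saturated :: "('a \<times> 'a) set \<Rightarrow> 'a set \<Rightarrow> bool" where
  "saturated R X \<longleftrightarrow> (\<forall>(x, y)\<in>R. x \<in> X \<longleftrightarrow> y \<in> X)"

lemma saturated_empty [simp]: "saturated {} X"
  by (simp add: saturated_def)

lemma saturated_insert [simp]:
  "saturated (insert (x, y) R) X \<longleftrightarrow> (x \<in> X \<longleftrightarrow> y \<in> X) \<and> saturated R X"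
  by (auto simp: saturated_def)

lemma saturated_Un [simp]: "saturated (R \<union> R') X \<longleftrightarrow> saturated R X \<and> saturated R' X"
  by (auto simp: saturated_def)

lemma saturated_UN [simp]: "saturated (\<Union>i\<in>I. R i) X \<longleftrightarrow> (\<forall>i\<in>I. saturated (R i) X)"
  by (auto simp: saturated_def)

lemma saturated_rtrancl:
  assumes "saturated R X" and "(x, y) \<in> (R \<union> R\<inverse>)\<^sup>*"
  shows "x \<in> X \<longleftrightarrow> y \<in> X"
  using assms(2)
proof (induction rule: rtrancl_induct)
  case (step y z)
  with assms(1) show ?case by (auto simp: saturated_def)
qed simp

lemma equiv_rtrancl_sym_closure:
  assumes "R \<subseteq> N \<times> N"
  shows "equiv N ((R \<union> R\<inverse>)\<^sup>* \<inter> N \<times> N)"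
proof -
  have "sym ((R \<union> R\<inverse>)\<^sup>*)"
    by (rule sym_rtrancl[OF sym_Un_converse])
  then show ?thesis
    unfolding equiv_def refl_on_def sym_def trans_def by (auto intro: rtrancl_trans)
qed

lemma quotient_subset_eq_classes_below_Union:
  assumes "equiv N r" and "Q \<subseteq> N // r"
  shows "{C \<in> N // r. C \<subseteq> \<Union>Q} = Q"
proof (intro equalityI subsetI)
  fix C assume "C \<in> {C \<in> N // r. C \<subseteq> \<Union>Q}"
  then have C: "C \<in> N // r" "C \<subseteq> \<Union>Q" by auto
  obtain x where "x \<in> C"
    using in_quotient_imp_non_empty[OF assms(1) C(1)] by blast
  with C(2) obtain C' where "C' \<in> Q" "x \<in> C'" by blast
  with assms C(1) \<open>x \<in> C\<close> have "C = C'"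
    using quotient_disj by blast
  with \<open>C' \<in> Q\<close> show "C \<in> Q" by simp
qed (use assms(2) in auto)

lemma saturated_subsets_eq_Unions_of_classes:
  assumes "R \<subseteq> N \<times> N"
  defines "r \<equiv> (R \<union> R\<inverse>)\<^sup>* \<inter> N \<times> N"
  shows "{X \<in> Pow N. saturated R X} = Union ` Pow (N // r)"
proof (intro equalityI subsetI)
  fix X assume "X \<in> {X \<in> Pow N. saturated R X}"
  then have X: "X \<subseteq> N" "saturated R X" by auto
  have "r `` {x} \<subseteq> X" if "x \<in> X" for x
    using saturated_rtrancl[OF X(2)] that by (auto simp: r_def)
  moreover have "x \<in> r `` {x}" if "x \<in> X" for x
    using X(1) that by (auto simp: r_def)
  ultimately have "X = \<Union>((\<lambda>x. r `` {x}) ` X)" by blast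
  moreover have "(\<lambda>x. r `` {x}) ` X \<in> Pow (N // r)"
    using X(1) by (auto intro: quotientI)
  ultimately show "X \<in> Union ` Pow (N // r)" by blast
next
  have eq: "equiv N r"
    unfolding r_def by (rule equiv_rtrancl_sym_closure[OF assms(1)])
  fix Y assume "Y \<in> Union ` Pow (N // r)"
  then obtain Q where Q: "Q \<subseteq> N // r" and Y: "Y = \<Union>Q" by auto
  have "(x, y) \<in> r" "(y, x) \<in> r" if "(x, y) \<in> R" for x y
    using that assms(1) by (auto simp: r_def)
  then have "saturated R Y"
    unfolding saturated_def Y using Q in_quotient_imp_closed[OF eq] by blast
  moreover have "Y \<subseteq> N"
    using Q Y in_quotient_imp_subset[OF eq] by blast
  ultimately show "Y \<in> {X \<in> Pow N. saturated R X}" by simp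
qed

lemma card_saturated_subsets:
  assumes "finite N" and "R \<subseteq> N \<times> N"
  shows "card {X \<in> Pow N. saturated R X} = 2 ^ card (N // ((R \<union> R\<inverse>)\<^sup>* \<inter> N \<times> N))"
proof -
  define r where "r = (R \<union> R\<inverse>)\<^sup>* \<inter> N \<times> N"
  have eq: "equiv N r"
    unfolding r_def by (rule equiv_rtrancl_sym_closure[OF assms(2)])
  have "inj_on Union (Pow (N // r))"
    by (rule inj_onI) (metis PowD quotient_subset_eq_classes_below_Union[OF eq])
  then have "card (Union ` Pow (N // r)) = card (Pow (N // r))"
    by (rule card_image)
  also have "\<dots> = 2 ^ card (N // r)"
    using assms(1) by (simp add: card_Pow finite_quotient r_def)
  finally show ?thesis
    using saturated_subsets_eq_Unions_of_classes[OF assms(2)] by (simp add: r_def)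
qed

lemma sum_Pow_signed_toggle_eq_0:
  fixes P :: "'a set \<Rightarrow> bool"
  assumes "finite E" and "e \<in> E"
    and toggle: "\<And>S. S \<subseteq> E \<Longrightarrow> P (insert e S) \<longleftrightarrow> P (S - {e})"
  shows "(\<Sum>S\<in>Pow E. if P S then (-1 :: 'b :: ring_1) ^ card S else 0) = 0"
proof (rule sum_involution_eq_0)
  define h where "h S = (if e \<in> S then S - {e} else insert e S)" for S
  fix S assume S: "S \<in> Pow E"
  then have "finite S"
    using assms(1) finite_subset by auto
  have "P (h S) \<longleftrightarrow> P S"
    using toggle[of S] S by (auto simp: h_def insert_absorb)
  moreover have "card S = Suc (card (h S)) \<or> card (h S) = Suc (card S)"
    using \<open>finite S\<close> card.remove[OF \<open>finite S\<close>, of e] by (auto simp: h_def)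
  ultimately show "(if P (h S) then (-1 :: 'b) ^ card (h S) else 0) +
      (if P S then (-1) ^ card S else 0) = 0"
    by auto
  show "h S \<in> Pow E" "h (h S) = S" "h S \<noteq> S"
    using S assms(2) by (auto simp: h_def insert_absorb)
qed

definition resolution_arcs :: "('d \<Rightarrow> 'd) \<Rightarrow> ('d \<Rightarrow> 'd) \<Rightarrow> 'd \<Rightarrow> bool \<Rightarrow> ('d \<times> 'd) set" where
  "resolution_arcs iota sigma d b =
     (if b then {(sigma d, sigma (iota d)), (sigma (sigma d), sigma (sigma (iota d)))}
      else {(sigma d, sigma (sigma (iota d))), (sigma (sigma d), sigma (iota d))})"

lemma resolution_rel_eq:
  "resolution_rel D iota sigma Md S =
     {(d, iota d) | d. d \<in> D - Md} \<union> (\<Union>d\<in>Md. resolution_arcs iota sigma d ({d, iota d} \<in> S))"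
  unfolding resolution_rel_def resolution_arcs_def by (auto split: if_splits)

lemma saturated_resolution_arcs_iota:
  assumes "iota (iota d) = d"
  shows "saturated (resolution_arcs iota sigma (iota d) b) X \<longleftrightarrow>
    saturated (resolution_arcs iota sigma d b) X"
  using assms unfolding resolution_arcs_def by auto

lemma saturated_resolution_arcs_state_indep:
  assumes "sigma d \<in> X \<longleftrightarrow> sigma (sigma d) \<in> X"
  shows "saturated (resolution_arcs iota sigma d b) X \<longleftrightarrow>
    saturated (resolution_arcs iota sigma d b') X"
  using assms unfolding resolution_arcs_def by auto

locale matched_trivalent_map =
  fixes D :: "'d set" and iota sigma :: "'d \<Rightarrow> 'd" and Md :: "'d set"
  assumes trivalent: "trivalent_map D iota sigma"
    and matching: "perfect_matching D iota sigma Md"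
begin

lemma finite_darts: "finite D"
  using trivalent by (simp add: trivalent_map_def)

lemma iota_in [simp]: "d \<in> D \<Longrightarrow> iota d \<in> D"
  and iota_iota [simp]: "d \<in> D \<Longrightarrow> iota (iota d) = d"
  and sigma_in [simp]: "d \<in> D \<Longrightarrow> sigma d \<in> D"
  and sigma_neq: "d \<in> D \<Longrightarrow> sigma d \<noteq> d"
  and sigma_cube [simp]: "d \<in> D \<Longrightarrow> sigma (sigma (sigma d)) = d"
  using trivalent by (auto simp: trivalent_map_def)

lemma sigma_sigma_neq: "d \<in> D \<Longrightarrow> sigma (sigma d) \<noteq> d"
  by (metis sigma_cube sigma_in sigma_neq)

lemma matching_darts: "Md \<subseteq> D"
  and iota_matching: "d \<in> Md \<Longrightarrow> iota d \<in> Md"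
  and card_vertex_matching: "d \<in> D \<Longrightarrow> card (vertex_of sigma d \<inter> Md) = 1"
  using matching by (auto simp: perfect_matching_def vertex_of_def)

lemma iota_nonmatching: "d \<in> D - Md \<Longrightarrow> iota d \<in> D - Md"
  using iota_matching by fastforce

lemma vertex_of_eq:
  assumes "x \<in> D" and "y \<in> vertex_of sigma x"
  shows "vertex_of sigma y = vertex_of sigma x"
  using assms unfolding vertex_of_def by auto

lemma matching_dart_at_vertex:
  assumes "d \<in> D"
  obtains m where "m \<in> Md" and "vertex_of sigma d \<inter> Md = {m}"
  using card_vertex_matching[OF assms] by (auto simp: card_1_singleton_iff)

lemma sigma_matching_nonmatching:
  assumes "m \<in> Md"
  shows "sigma m \<in> D - Md" and "sigma (sigma m) \<in> D - Md"
proof -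
  have mD: "m \<in> D" using assms matching_darts by auto
  obtain m' where "vertex_of sigma m \<inter> Md = {m'}"
    using matching_dart_at_vertex[OF mD] by blast
  moreover have "m \<in> vertex_of sigma m" by (simp add: vertex_of_def)
  ultimately have "vertex_of sigma m \<inter> Md = {m}" using assms by auto
  then show "sigma m \<in> D - Md" "sigma (sigma m) \<in> D - Md"
    using mD sigma_neq[OF mD] sigma_sigma_neq[OF mD] by (auto simp: vertex_of_def)
qed

lemma nonmatching_pair_at_vertex:
  assumes "a \<in> D - Md" "b \<in> D - Md" "a \<noteq> b" "b \<in> vertex_of sigma a"
  obtains m where "m \<in> Md" and "{sigma m, sigma (sigma m)} = {a, b}"
proof -
  have aD: "a \<in> D" using assms by auto
  obtain m where m: "m \<in> Md" "vertex_of sigma a \<inter> Md = {m}"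
    using matching_dart_at_vertex[OF aD] by blast
  then have "m \<in> vertex_of sigma a" by blast
  then have vm: "vertex_of sigma m = vertex_of sigma a"
    by (rule vertex_of_eq[OF aD])
  have "a \<in> vertex_of sigma m" "b \<in> vertex_of sigma m"
    using assms(4) unfolding vm by (simp_all add: vertex_of_def)
  moreover have "m \<noteq> a" "m \<noteq> b"
    using assms(1,2) m(1) by auto
  ultimately have "a \<in> {sigma m, sigma (sigma m)}" "b \<in> {sigma m, sigma (sigma m)}"
    unfolding vertex_of_def by auto
  then have "{sigma m, sigma (sigma m)} = {a, b}"
    using assms(3) by blast
  with m(1) show thesis by (rule that)
qed

lemma resolution_rel_subset: "resolution_rel D iota sigma Md S \<subseteq> (D - Md) \<times> (D - Md)"
  using iota_nonmatching iota_matching sigma_matching_nonmatching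
  by (auto simp: resolution_rel_eq resolution_arcs_def)

lemma two_pow_num_curves:
  "2 ^ num_curves D iota sigma Md S =
     card {X \<in> Pow (D - Md). saturated (resolution_rel D iota sigma Md S) X}"
  using card_saturated_subsets[OF _ resolution_rel_subset] finite_darts
  by (simp add: num_curves_def Let_def)

lemma triangle_corner:
  assumes "d1 \<in> D - Md" "d2 \<in> D - Md" "d3 \<in> D - Md"
    and "d2 \<in> vertex_of sigma (iota d1)" "d3 \<in> vertex_of sigma (iota d2)"
    and "vertex_of sigma d1 \<noteq> vertex_of sigma d3"
  obtains m where "m \<in> Md" and "{sigma m, sigma (sigma m)} = {iota d1, d2}"
proof (rule nonmatching_pair_at_vertex)
  show "iota d1 \<noteq> d2"
  proof
    assume "iota d1 = d2"
    then have "d3 \<in> vertex_of sigma d1"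
      using assms(1,5) by auto
    then show False
      using assms(1,6) vertex_of_eq by fastforce
  qed
qed (use assms iota_nonmatching in auto)

text \<open>Pigeonhole on the colours of the three triangle edges.\<close>

lemma triangle_monochromatic_corner:
  assumes "has_triangle_off_matching D iota sigma Md"
    and iota_sat: "\<forall>d\<in>D - Md. d \<in> X \<longleftrightarrow> iota d \<in> X"
  obtains m where "m \<in> Md" and "sigma m \<in> X \<longleftrightarrow> sigma (sigma m) \<in> X"
proof -
  have corner: "\<exists>m\<in>Md. sigma m \<in> X \<longleftrightarrow> sigma (sigma m) \<in> X"
    if hyps: "a \<in> D - Md" "b \<in> D - Md" "c \<in> D - Md"
      "b \<in> vertex_of sigma (iota a)" "c \<in> vertex_of sigma (iota b)"
      "vertex_of sigma a \<noteq> vertex_of sigma c" "a \<in> X \<longleftrightarrow> b \<in> X" for a b c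
  proof -
    obtain m where "m \<in> Md" "{sigma m, sigma (sigma m)} = {iota a, b}"
      using triangle_corner[OF hyps(1-6)] .
    moreover have "iota a \<in> X \<longleftrightarrow> b \<in> X"
      using iota_sat hyps(1,7) by blast
    ultimately show ?thesis
      by (metis doubleton_eq_iff)
  qed
  obtain d1 d2 d3 where d: "d1 \<in> D - Md" "d2 \<in> D - Md" "d3 \<in> D - Md"
    "d2 \<in> vertex_of sigma (iota d1)" "d3 \<in> vertex_of sigma (iota d2)"
    "d1 \<in> vertex_of sigma (iota d3)"
    "vertex_of sigma d1 \<noteq> vertex_of sigma d2" "vertex_of sigma d2 \<noteq> vertex_of sigma d3"
    "vertex_of sigma d1 \<noteq> vertex_of sigma d3"
    using assms(1) unfolding has_triangle_off_matching_def by blast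
  have "(d1 \<in> X \<longleftrightarrow> d2 \<in> X) \<or> (d2 \<in> X \<longleftrightarrow> d3 \<in> X) \<or> (d3 \<in> X \<longleftrightarrow> d1 \<in> X)"
    by blast
  then have "\<exists>m\<in>Md. sigma m \<in> X \<longleftrightarrow> sigma (sigma m) \<in> X"
    using corner[of d1 d2 d3] corner[of d2 d3 d1] corner[of d3 d1 d2] d by metis
  with that show thesis by blast
qed

lemma signed_count_compatible_states_eq_0:
  assumes "has_triangle_off_matching D iota sigma Md"
  shows "(\<Sum>S\<in>Pow (matching_edges iota Md).
    if saturated (resolution_rel D iota sigma Md S) X then (-1 :: 'a :: ring_1) ^ card S else 0) = 0"
proof (cases "\<forall>d\<in>D - Md. d \<in> X \<longleftrightarrow> iota d \<in> X")
  case False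
  then have "\<not> saturated (resolution_rel D iota sigma Md S) X" for S
    by (auto simp: resolution_rel_eq saturated_def)
  then show ?thesis by simp
next
  case True
  then obtain m where m: "m \<in> Md" "sigma m \<in> X \<longleftrightarrow> sigma (sigma m) \<in> X"
    using triangle_monochromatic_corner[OF assms] by blast
  have iota_m: "iota (iota m) = m"
    using m(1) matching_darts by auto
  have state_indep: "saturated (resolution_arcs iota sigma d b) X \<longleftrightarrow>
      saturated (resolution_arcs iota sigma d b') X" if "{d, iota d} = {m, iota m}" for d b b'
  proof -
    from that have "d = m \<or> d = iota m"
      by (metis doubleton_eq_iff)
    then show ?thesis
      using saturated_resolution_arcs_state_indep[of sigma m X iota] m(2)
        saturated_resolution_arcs_iota[of iota m sigma] iota_m
      by auto
  qed
  show ?thesis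
  proof (rule sum_Pow_signed_toggle_eq_0)
    show "finite (matching_edges iota Md)"
      using finite_darts matching_darts by (auto simp: matching_edges_def intro: finite_subset)
    show "{m, iota m} \<in> matching_edges iota Md"
      using m(1) by (auto simp: matching_edges_def)
    fix S
    have "saturated (resolution_arcs iota sigma d ({d, iota d} \<in> insert {m, iota m} S)) X \<longleftrightarrow>
        saturated (resolution_arcs iota sigma d ({d, iota d} \<in> S - {{m, iota m}})) X" for d
      by (cases "{d, iota d} = {m, iota m}") (simp_all add: state_indep)
    then show "saturated (resolution_rel D iota sigma Md (insert {m, iota m} S)) X \<longleftrightarrow>
        saturated (resolution_rel D iota sigma Md (S - {{m, iota m}})) X"
      by (simp add: resolution_rel_eq)
  qed
qed

end

theorem lemma2p9:
  fixes D :: "'d set" and iota sigma :: "'d \<Rightarrow> 'd" and Md :: "'d set"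
  assumes "trivalent_map D iota sigma"
    and "planar_map D iota sigma"
    and "perfect_matching D iota sigma Md"
    and "has_triangle_off_matching D iota sigma Md"
  shows "two_factor_poly D iota sigma Md 1 = 0"
proof -
  interpret matched_trivalent_map D iota sigma Md
    using assms(1,3) by unfold_locales
  let ?E = "matching_edges iota Md" and ?N = "D - Md"
  let ?sat = "\<lambda>S X. saturated (resolution_rel D iota sigma Md S) X"
  have "two_factor_poly D iota sigma Md 1 =
      (\<Sum>S\<in>Pow ?E. (-1) ^ card S * real (card {X \<in> Pow ?N. ?sat S X}))"
    unfolding two_factor_poly_def two_pow_num_curves[symmetric] by simp
  also have "\<dots> = (\<Sum>S\<in>Pow ?E. \<Sum>X\<in>Pow ?N. if ?sat S X then (-1) ^ card S else 0)"
    using finite_darts by (simp add: sum.If_cases Int_def mult.commute)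
  also have "\<dots> = (\<Sum>X\<in>Pow ?N. \<Sum>S\<in>Pow ?E. if ?sat S X then (-1) ^ card S else 0)"
    by (rule sum.swap)
  also have "\<dots> = 0"
    using signed_count_compatible_states_eq_0[OF assms(4), where 'a = real] by simp
  finally show ?thesis .
qed

end
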